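(* In any execution of $\mathcal{U}$, suppose a process $p$ reads $(t(o), o, h(o))$ from $A$ at line 8 at time $T$ and $o$ is done at time $T$. If $p$ subsequently executes line 10 (in the same iteration), then the condition tested at line 10 is false.
   Context: Model: an asynchronous shared-memory system with possibly infinitely many processes, any of which may crash, communicating via atomic shared objects. A fetch-and-increment (F\&I) object stores an integer; F\&I$(C)$ atomically returns the current value and increments it. A generalized-compare-and-swap (GCAS) object $O$ stores a value and supports Read$(O)$ and GCAS$(c, O, v_1, v_2)$, which atomically does: if $c(\text{current value of } O, v_1)$ holds then set $O := v_2$ and return true, else return false. Tuples are compared componentwise for $=$; GCAS$(>, A, (t,-,-), v)$ succeeds iff the time field of $A$ is strictly greater than $t$. Implemented type $\mathcal{T} = (OP, RES, Q, \delta)$ with initial state $s_0$; a procedure $apply_{\mathcal{T}}(o,s)$ returns some $(s',r)$ with $(s,o,s',r)\in\delta$. $NULL$ is a value different from every response of $\mathcal{T}$, and $NOOP$ is a name different from every operation of $\mathcal{T}$. Algorithm $\mathcal{U}$: each process $p$ owns a GCAS object $H_p$ with fields $(time, response)$. Shared objects: F\&I object $C$, initially $1$; GCAS object $A$ with fields $(time, op, ptr)$, initially $(0, NOOP, h(NOOP))$, where $h(NOOP)$ is a pointer to an immutable location containing $(0,\perp)$; GCAS object $S$ with fields $(time, state, response, ptr)$, initially $(0, s_0, \perp, h(NOOP))$. Process $p$ performs operation $o$ by calling DoOp$(o)$: (1) DoOp$(o)$ invoked; (2) $t := $ F\&I$(C)$; (3) $H_p := (t, NULL)$; (4) while $H_p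 = (t, NULL)$ do: (5) $(t^*, s^*, r^*, roptr^* ) := S$; (6) GCAS$(=, *roptr^*, (t^*, NULL), (t^*, r^* ))$; (7) GCAS$(>, A, (t,-,-), (t, o, \&H_p))$; (8) $(t', o', roptr') := A$; (9) $(\hat t, \hat r) := *roptr'$; (10) if $(\hat t,\hat r) = (t', NULL)$ then (11) $(s', r') := apply_{\mathcal{T}}(o', s^* )$; (12) GCAS$(=, S, (t^*,s^*,r^*,roptr^* ), (t', s', r', roptr'))$; (13) else GCAS$(=, A, (t', o', roptr'), (t, o, \&H_p))$; end while; (14) return $H_p.response$. Notation: an "operation" $o$ means one invocation of DoOp$(o)$ (or the initial $NOOP$). $p(o)$ is the process executing it; $t(o)$ is the value returned by its F\&I at line 2, or $\infty$ if line 2 has not been executed; $h(o)$ is $H_{p(o)}$. For $NOOP$: $t(NOOP)=0$ and $h(NOOP)$ is the immutable location containing $(0,\perp)$. Operation $o$ is done at time $T$ if at some time $T'\le T$, $h(o) = (t(o), r)$ with $r \neq NULL$. *)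

theory Defs
  imports Main
begin

(* Responses stored in H_p / S: NULL, the special initial value \<bottom>, or a response of T. *)
datatype 'r resp = Null | Bot | Resp 'r

(* Pointers: h(NOOP) (immutable location holding (0,\<bottom>)) or &H_q *)
datatype 'p ptr = NoopLoc | HLoc 'p

(* Program counter: L1 = idle (next step invokes DoOp), Lk = next step executes line k *)
datatype pc = L1 | L2 | L3 | L4 | L5 | L6 | L7 | L8 | L9 | L10 | L11 | L12 | L13 | L14

record ('op,'s,'r,'p) lstate =
  pc  :: pc
  opn :: 'op
  tt  :: nat
  ts  :: nat            (* t* *)
  ss  :: 's             (* s* *)
  rs  :: "'r resp"      (* r* *)
  ps  :: "'p ptr"       (* roptr* *)
  tp  :: nat            (* t' *)
  opp :: "'op option"   (* o'  (None = NOOP) *)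
  pp  :: "'p ptr"       (* roptr' *)
  th  :: nat            (* t-hat *)
  rh  :: "'r resp"      (* r-hat *)
  sp  :: 's             (* s' *)
  rp  :: 'r             (* r' *)

record ('op,'s,'r,'p) config =
  Cv :: nat                                   (* F&I object C *)
  Av :: "nat \<times> 'op option \<times> 'p ptr"          (* A = (time, op, ptr), None = NOOP *)
  Sv :: "nat \<times> 's \<times> 'r resp \<times> 'p ptr"      (* S = (time, state, response, ptr) *)
  Hv :: "'p \<Rightarrow> nat \<times> 'r resp"                (* H_q = (time, response) *)
  loc :: "'p \<Rightarrow> ('op,'s,'r,'p) lstate"

definition deref :: "('op,'s,'r,'p) config \<Rightarrow> 'p ptr \<Rightarrow> nat \<times> 'r resp" where
  "deref c x = (case x of NoopLoc \<Rightarrow> (0, Bot) | HLoc q \<Rightarrow> Hv c q)"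

definition store :: "('op,'s,'r,'p) config \<Rightarrow> 'p ptr \<Rightarrow> nat \<times> 'r resp \<Rightarrow> ('op,'s,'r,'p) config" where
  "store c x v = (case x of NoopLoc \<Rightarrow> c | HLoc q \<Rightarrow> c\<lparr>Hv := (Hv c)(q := v)\<rparr>)"

definition setloc :: "('op,'s,'r,'p) config \<Rightarrow> 'p \<Rightarrow> ('op,'s,'r,'p) lstate \<Rightarrow> ('op,'s,'r,'p) config" where
  "setloc c p l = c\<lparr>loc := (loc c)(p := l)\<rparr>"

definition init_config :: "'s \<Rightarrow> ('op,'s,'r,'p) config \<Rightarrow> bool" where
  "init_config s0 c \<longleftrightarrow> Cv c = 1 \<and> Av c = (0, None, NoopLoc) \<and> Sv c = (0, s0, Bot, NoopLoc)
     \<and> (\<forall>q. fst (Hv c q) = 0) \<and> (\<forall>q. pc (loc c q) = L1)"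

(* One atomic step of process p of algorithm U; delta is the transition relation of T *)
definition pstep :: "('s \<times> 'op \<times> 's \<times> 'r) set \<Rightarrow> 'p \<Rightarrow> ('op,'s,'r,'p) config \<Rightarrow> ('op,'s,'r,'p) config \<Rightarrow> bool" where
  "pstep delta p c c' \<longleftrightarrow> (let l = loc c p in case pc l of
     L1 \<Rightarrow> (\<exists>x. c' = setloc c p (l\<lparr>pc := L2, opn := x\<rparr>))
   | L2 \<Rightarrow> c' = setloc (c\<lparr>Cv := Cv c + 1\<rparr>) p (l\<lparr>tt := Cv c, pc := L3\<rparr>)
   | L3 \<Rightarrow> c' = setloc (c\<lparr>Hv := (Hv c)(p := (tt l, Null))\<rparr>) p (l\<lparr>pc := L4\<rparr>)
   | L4 \<Rightarrow> c' = setloc c p (l\<lparr>pc := (if Hv c p = (tt l, Null) then L5 else L14)\<rparr>)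
   | L5 \<Rightarrow> (case Sv c of (t1, s1, r1, x1) \<Rightarrow>
             c' = setloc c p (l\<lparr>ts := t1, ss := s1, rs := r1, ps := x1, pc := L6\<rparr>))
   | L6 \<Rightarrow> c' = setloc (if deref c (ps l) = (ts l, Null) then store c (ps l) (ts l, rs l) else c)
                       p (l\<lparr>pc := L7\<rparr>)
   | L7 \<Rightarrow> c' = setloc (if fst (Av c) > tt l then c\<lparr>Av := (tt l, Some (opn l), HLoc p)\<rparr> else c)
                       p (l\<lparr>pc := L8\<rparr>)
   | L8 \<Rightarrow> (case Av c of (t1, o1, x1) \<Rightarrow>
             c' = setloc c p (l\<lparr>tp := t1, opp := o1, pp := x1, pc := L9\<rparr>))
   | L9 \<Rightarrow> (case deref c (pp l) of (t1, r1) \<Rightarrow>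
             c' = setloc c p (l\<lparr>th := t1, rh := r1, pc := L10\<rparr>))
   | L10 \<Rightarrow> c' = setloc c p (l\<lparr>pc := (if (th l, rh l) = (tp l, Null) then L11 else L13)\<rparr>)
   | L11 \<Rightarrow> (\<exists>x s1 r1. opp l = Some x \<and> (ss l, x, s1, r1) \<in> delta \<and>
             c' = setloc c p (l\<lparr>sp := s1, rp := r1, pc := L12\<rparr>))
   | L12 \<Rightarrow> c' = setloc (if Sv c = (ts l, ss l, rs l, ps l)
                        then c\<lparr>Sv := (tp l, sp l, Resp (rp l), pp l)\<rparr> else c) p (l\<lparr>pc := L4\<rparr>)
   | L13 \<Rightarrow> c' = setloc (if Av c = (tp l, opp l, pp l)
                        then c\<lparr>Av := (tt l, Some (opn l), HLoc p)\<rparr> else c) p (l\<lparr>pc := L4\<rparr>)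
   | L14 \<Rightarrow> c' = setloc c p (l\<lparr>pc := L1\<rparr>))"

(* An execution: time i is the configuration after i steps; each step is a step of some
   process (crashes = processes that stop taking steps); idle (stuttering) steps allow
   finite executions. *)
definition execution :: "('s \<times> 'op \<times> 's \<times> 'r) set \<Rightarrow> 's \<Rightarrow> (nat \<Rightarrow> ('op,'s,'r,'p) config) \<Rightarrow> bool" where
  "execution delta s0 E \<longleftrightarrow> init_config s0 (E 0) \<and>
     (\<forall>i. E (Suc i) = E i \<or> (\<exists>p. pstep delta p (E i) (E (Suc i))))"

(* Operations: the initial NOOP, or the invocation of DoOp by process q whose F&I returned t *)
datatype ('op,'p) operation = NoopOp | Inv 'p nat 'op

fun t_of :: "('op,'p) operation \<Rightarrow> nat" where
  "t_of NoopOp = 0" | "t_of (Inv q t x) = t"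
fun name_of :: "('op,'p) operation \<Rightarrow> 'op option" where
  "name_of NoopOp = None" | "name_of (Inv q t x) = Some x"
fun h_of :: "('op,'p) operation \<Rightarrow> 'p ptr" where
  "h_of NoopOp = NoopLoc" | "h_of (Inv q t x) = HLoc q"

fun is_operation :: "(nat \<Rightarrow> ('op,'s,'r,'p) config) \<Rightarrow> ('op,'p) operation \<Rightarrow> bool" where
  "is_operation E NoopOp = True"
| "is_operation E (Inv q t x) = (\<exists>i. pc (loc (E i) q) = L2 \<and> pc (loc (E (Suc i)) q) = L3
       \<and> opn (loc (E i) q) = x \<and> tt (loc (E (Suc i)) q) = t)"

definition done_at :: "(nat \<Rightarrow> ('op,'s,'r,'p) config) \<Rightarrow> ('op,'p) operation \<Rightarrow> nat \<Rightarrow> bool" where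
  "done_at E oi T \<longleftrightarrow> (\<exists>T' \<le> T. \<exists>r. deref (E T') (h_of oi) = (t_of oi, r) \<and> r \<noteq> Null)"

end

theory Submission
  imports Defs
begin

text \<open>Once \<open>o\<close> is done, the location \<open>h(o)\<close> never again holds \<open>(t(o), NULL)\<close>: the only
  write of \<open>NULL\<close> is line 3 of \<open>H\<^sub>q\<close>'s owner, and it comes with a fresh time stamp from \<open>C\<close>,
  strictly larger than the one stored before. Between lines 8 and 10 process \<open>p\<close> keeps
  \<open>t' = t(o)\<close> and \<open>roptr' = h(o)\<close>, and the pair tested at line 10 is what it read from
  \<open>h(o)\<close> at line 9, after time \<open>T\<close>; hence it differs from \<open>(t(o), NULL)\<close>.\<close>

text \<open>The last two clauses guarantee that line 6 never stores \<open>NULL\<close>.\<close>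

definition U_invariant :: "('op,'s,'r,'p) config \<Rightarrow> bool" where
  "U_invariant c \<longleftrightarrow> (\<forall>q. fst (Hv c q) < Cv c)
     \<and> (\<forall>q. pc (loc c q) = L3 \<longrightarrow> fst (Hv c q) < tt (loc c q) \<and> tt (loc c q) < Cv c)
     \<and> (\<forall>q. pc (loc c q) = L6 \<longrightarrow> rs (loc c q) \<noteq> Null)
     \<and> fst (snd (snd (Sv c))) \<noteq> Null"

lemma U_invariant_init: "init_config s0 c \<Longrightarrow> U_invariant c"
  unfolding init_config_def U_invariant_def by auto

lemma U_invariant_pstep:
  assumes "U_invariant c" "pstep delta p c c'"
  shows "U_invariant c'"
  using assms unfolding pstep_def Let_def U_invariant_def
  apply (cases "pc (loc c p)")
  apply (auto simp: setloc_def store_def deref_def split: ptr.splits prod.splits if_splits)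
   apply (metis less_Suc_eq)
  by (metis fst_conv)

lemma loc_pstep_other:
  assumes "pstep delta q c c'" "q \<noteq> p"
  shows "loc c' p = loc c p"
  using assms unfolding pstep_def Let_def
  by (cases "pc (loc c q)")
     (auto simp: setloc_def store_def deref_def split: ptr.splits prod.splits if_splits)

lemma pstep_L8_reads_A:
  assumes "pstep delta p c c'" "pc (loc c p) = L8"
  shows "tp (loc c' p) = fst (Av c) \<and> pp (loc c' p) = snd (snd (Av c))"
  using assms unfolding pstep_def Let_def by (auto simp: setloc_def split: prod.splits)

lemma pstep_within_L9_L10:
  assumes "pstep delta p c c'" "pc (loc c p) \<in> {L9, L10}" "pc (loc c' p) \<in> {L9, L10}"
  shows "pc (loc c p) = L9 \<and> loc c' p = (loc c p)\<lparr>th := fst (deref c (pp (loc c p))),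
           rh := snd (deref c (pp (loc c p))), pc := L10\<rparr>"
  using assms unfolding pstep_def Let_def
  by (cases "pc (loc c p)") (auto simp: setloc_def split: prod.splits if_splits)

lemma execution_invariant_from:
  assumes "execution delta s0 E" "j \<le> i" "P (E j)"
    and "\<And>i p. j \<le> i \<Longrightarrow> P (E i) \<Longrightarrow> pstep delta p (E i) (E (Suc i)) \<Longrightarrow> P (E (Suc i))"
  shows "P (E i)"
  using \<open>j \<le> i\<close>
proof (induction i rule: dec_induct)
  case base
  show ?case using \<open>P (E j)\<close> .
next
  case (step i)
  have "E (Suc i) = E i \<or> (\<exists>p. pstep delta p (E i) (E (Suc i)))"
    using \<open>execution delta s0 E\<close> unfolding execution_def by blast
  then show ?case using step assms(4) by auto
qed

lemma U_invariant_execution: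
  assumes "execution delta s0 E"
  shows "U_invariant (E i)"
proof (rule execution_invariant_from[OF assms le0])
  show "U_invariant (E 0)"
    using assms unfolding execution_def by (blast intro: U_invariant_init)
qed (rule U_invariant_pstep)

lemma loc_change_pstep:
  assumes "execution delta s0 E" "loc (E (Suc i)) p \<noteq> loc (E i) p"
  shows "pstep delta p (E i) (E (Suc i))"
proof -
  obtain q where q: "pstep delta q (E i) (E (Suc i))"
    using assms unfolding execution_def by metis
  with assms(2) have "q = p" by (metis loc_pstep_other)
  with q show ?thesis by simp
qed

definition settled :: "nat \<Rightarrow> nat \<times> 'r resp \<Rightarrow> bool" where
  "settled t v \<longleftrightarrow> t < fst v \<or> (fst v = t \<and> snd v \<noteq> Null)"

lemma settled_not_pending: "settled t v \<Longrightarrow> v \<noteq> (t, Null)"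
  unfolding settled_def by auto

lemma settled_deref_pstep:
  assumes "U_invariant c" "pstep delta p c c'" "settled t (deref c x)"
  shows "settled t (deref c' x)"
  using assms unfolding pstep_def Let_def U_invariant_def settled_def
  by (cases "pc (loc c p)")
     (auto simp: setloc_def store_def deref_def split: ptr.splits prod.splits if_splits)

lemma done_at_not_pending:
  assumes "execution delta s0 E" "done_at E oi T" "T \<le> j"
  shows "deref (E j) (h_of oi) \<noteq> (t_of oi, Null)"
proof -
  obtain T' r where "T' \<le> T" "deref (E T') (h_of oi) = (t_of oi, r)" "r \<noteq> Null"
    using assms(2) unfolding done_at_def by blast
  then have "settled (t_of oi) (deref (E T') (h_of oi))"
    by (simp add: settled_def)
  then have "settled (t_of oi) (deref (E j) (h_of oi))"
    using \<open>T' \<le> T\<close> \<open>T \<le> j\<close>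
      execution_invariant_from[OF assms(1), where P = "\<lambda>c. settled (t_of oi) (deref c (h_of oi))"]
      settled_deref_pstep[OF U_invariant_execution[OF assms(1)]]
    by simp
  then show ?thesis by (rule settled_not_pending)
qed

lemma L9_L10_window:
  assumes "execution delta s0 E"
    and window: "\<forall>m. j < m \<and> m \<le> k \<longrightarrow> pc (loc (E m) p) \<in> {L9, L10}"
    and "pc (loc (E (Suc j)) p) = L9" "Suc j \<le> m" "m \<le> k"
  shows "tp (loc (E m) p) = tp (loc (E (Suc j)) p) \<and> pp (loc (E m) p) = pp (loc (E (Suc j)) p)
    \<and> (pc (loc (E m) p) = L10 \<longrightarrow> (\<exists>i. j < i \<and> i < m \<and>
          (th (loc (E m) p), rh (loc (E m) p)) = deref (E i) (pp (loc (E (Suc j)) p))))"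
  using \<open>Suc j \<le> m\<close> \<open>m \<le> k\<close>
proof (induction m rule: dec_induct)
  case base
  then show ?case using assms(3) by simp
next
  case (step m)
  show ?case
  proof (cases "loc (E (Suc m)) p = loc (E m) p")
    case True
    with step show ?thesis by (metis Suc_leD less_SucI)
  next
    case False
    have "pstep delta p (E m) (E (Suc m))"
      using loc_change_pstep[OF assms(1) False] .
    moreover have "pc (loc (E m) p) \<in> {L9, L10}" "pc (loc (E (Suc m)) p) \<in> {L9, L10}"
      using window step.hyps step.prems by auto
    ultimately have "loc (E (Suc m)) p = (loc (E m) p)\<lparr>th := fst (deref (E m) (pp (loc (E m) p))),
           rh := snd (deref (E m) (pp (loc (E m) p))), pc := L10\<rparr>"
      by (blast dest: pstep_within_L9_L10)
    with step show ?thesis by (auto intro!: exI[of _ m])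
  qed
qed

theorem mainTheorem9:
  fixes delta :: "('s \<times> 'op \<times> 's \<times> 'r) set" and s0 :: 's
    and E :: "nat \<Rightarrow> ('op,'s,'r,'p) config" and p :: 'p
    and oi :: "('op,'p) operation" and T k :: nat
  assumes "execution delta s0 E"
    and "is_operation E oi"
    and "pc (loc (E T) p) = L8" and "pc (loc (E (Suc T)) p) = L9"
    and "Av (E T) = (t_of oi, name_of oi, h_of oi)"
    and "done_at E oi T"
    and "T < k" and "\<forall>m. T < m \<and> m \<le> k \<longrightarrow> pc (loc (E m) p) \<in> {L9, L10}"
    and "pc (loc (E k) p) = L10" and "pc (loc (E (Suc k)) p) \<noteq> L10"
  shows "(th (loc (E k) p), rh (loc (E k) p)) \<noteq> (tp (loc (E k) p), Null)"
proof -
  have "loc (E (Suc T)) p \<noteq> loc (E T) p"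
    using assms(3,4) by auto
  then have "tp (loc (E (Suc T)) p) = t_of oi \<and> pp (loc (E (Suc T)) p) = h_of oi"
    using pstep_L8_reads_A[OF loc_change_pstep[OF assms(1)] assms(3)] assms(5) by simp
  moreover obtain i where "T < i"
    and "(th (loc (E k) p), rh (loc (E k) p)) = deref (E i) (pp (loc (E (Suc T)) p))"
    and "tp (loc (E k) p) = tp (loc (E (Suc T)) p)"
    using L9_L10_window[OF assms(1,8,4)] assms(7,9) by (metis Suc_leI order_refl)
  moreover have "deref (E i) (h_of oi) \<noteq> (t_of oi, Null)"
    using done_at_not_pending[OF assms(1,6)] \<open>T < i\<close> by simp
  ultimately show ?thesis by simp
qed

end
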